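(* The estimate of $\Theta$ returned by the BAGUS algorithm (described in the context) is always symmetric, and it is also positive definite if the initial value $\Theta^{(0)}$ is positive definite.
   Context: BAGUS algorithm. Input: sample covariance $S=[s_{ij}]$ ($p\times p$), sample size $n$, hyperparameters $0<v_0<v_1$, $\eta\in(0,1)$, $\tau>0$, $B>0$, and an initial symmetric matrix $\Theta^{(0)}$ (the paper uses $\Theta^{(0)}=I$), with $W$ initialized as $W=(\Theta^{(0)})^{-1}$ (so $W=I$ when $\Theta^{(0)}=I$); throughout, $W$ is maintained equal to $\Theta^{-1}$. Repeat until convergence: (E-step) for all $i\ne j$ set $p_{ij}$ by $\log\frac{p_{ij}}{1-p_{ij}}=\log\frac{v_0}{v_1}+\log\frac{\eta}{1-\eta}-\frac{|\theta_{ij}|}{v_1}+\frac{|\theta_{ij}|}{v_0}$, using the current $\Theta$. (M-step) for $j=1,\dots,p$: partition $\Theta$ (and likewise $W,S,P=[p_{ij}]$) by moving row and column $j$ to the end: $\Theta_{11}$ is $\Theta$ with row and column $j$ deleted, $\theta_{12}$ is column $j$ without its $j$-th entry, $\theta_{22}=\theta_{jj}$, and similarly $W_{11},w_{12},w_{22}$, $s_{12},s_{22}$, $P_{12}$. Set $w_{22}\leftarrow s_{22}+\frac2n\tau$. Compute $\Theta_{11}^{-1}=W_{11}-w_{12}w_{12}^T/w_{22}$ (the inverse of the current $\Theta_{11}$). Update $\theta_{12}$ by cyclic coordinate descent: for each coordinate $k$, solve for $(\theta_{12})_k$ the equation $n s_{12}+nw_{22}\Theta_{11}^{-1}\theta_{12}+\big(\frac1{v_1}P_{12}+\frac1{v_0}(1-P_{12})\big)\odot\mathrm{sign}(\theta_{12})=0$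 in coordinate $k$ with the other coordinates fixed, repeating until convergence; if the resulting matrix has spectral norm exceeding $B$, keep the previous $\theta_{12}$ instead. Then set $\theta_{22}\leftarrow\frac1{w_{22}}+\theta_{12}^T\Theta_{11}^{-1}\theta_{12}$, place $\theta_{12}$ in both column $j$ and row $j$ of $\Theta$, and update $W_{11},w_{12}$ so that $W=\Theta^{-1}$ via $W_{11}=\Theta_{11}^{-1}+\frac{\Theta_{11}^{-1}\theta_{12}\theta_{12}^T\Theta_{11}^{-1}}{\theta_{22}-\theta_{12}^T\Theta_{11}^{-1}\theta_{12}}$, $w_{12}=-\frac{\Theta_{11}^{-1}\theta_{12}}{\theta_{22}-\theta_{12}^T\Theta_{11}^{-1}\theta_{12}}$. Output: $\Theta$ and $P$. Here $\odot$ is entrywise multiplication and $\mathrm{sign}$ is applied entrywise. *)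

theory Defs
  imports "HOL-Analysis.Analysis"
begin

text \<open>Matrices are real p x p matrices with entries A \$ i \$ j (row i, column j); the
index type 'n is finite and linearly ordered (the order fixes the cyclic sweep order).\<close>

definition sym_mat :: "real^'n^'n \<Rightarrow> bool" where
  "sym_mat A \<longleftrightarrow> transpose A = A"

definition pos_def_mat :: "real^'n^'n \<Rightarrow> bool" where
  "pos_def_mat A \<longleftrightarrow> transpose A = A \<and> (\<forall>x. x \<noteq> 0 \<longrightarrow> x \<bullet> (A *v x) > 0)"

definition pos_semidef_mat :: "real^'n^'n \<Rightarrow> bool" where
  "pos_semidef_mat A \<longleftrightarrow> transpose A = A \<and> (\<forall>x. x \<bullet> (A *v x) \<ge> 0)"

definition spec_norm :: "real^'n^'n \<Rightarrow> real" where
  "spec_norm A = onorm (\<lambda>x. A *v x)"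

text \<open>E-step: p_ij determined by its log-odds (used only for i \<noteq> j).\<close>
definition bagus_estep :: "real \<Rightarrow> real \<Rightarrow> real \<Rightarrow> real^'n^'n \<Rightarrow> 'n \<Rightarrow> 'n \<Rightarrow> real" where
  "bagus_estep v0 v1 eta Th i j =
     (let L = ln (v0 / v1) + ln (eta / (1 - eta)) - \<bar>Th $ i $ j\<bar> / v1 + \<bar>Th $ i $ j\<bar> / v0
      in exp L / (1 + exp L))"

text \<open>sign, read as the subdifferential of the absolute value (sign 0 ranges over [-1,1]).\<close>
definition sign_sub :: "real \<Rightarrow> real \<Rightarrow> bool" where
  "sign_sub x g \<longleftrightarrow> (x > 0 \<longrightarrow> g = 1) \<and> (x < 0 \<longrightarrow> g = -1) \<and> (x = 0 \<longrightarrow> -1 \<le> g \<and> g \<le> 1)"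

text \<open>A k l stands for the (k,l) entry of Theta11 inverse, c k for the penalty weight,
  beta for the current theta12 (entries indexed by k \<noteq> j).\<close>
definition bagus_coord ::
  "real \<Rightarrow> real^'n^'n \<Rightarrow> real \<Rightarrow> ('n \<Rightarrow> 'n \<Rightarrow> real) \<Rightarrow> ('n \<Rightarrow> real) \<Rightarrow> 'n \<Rightarrow> 'n
     \<Rightarrow> ('n \<Rightarrow> real) \<Rightarrow> ('n \<Rightarrow> real)" where
  "bagus_coord nn S w22 A c j k beta =
     beta(k := (SOME x. \<exists>g. sign_sub x g \<and>
        nn * S $ k $ j + nn * w22 * (\<Sum>l\<in>UNIV - {j}. A k l * (beta(k := x)) l) + c k * g = 0))"

definition bagus_sweep ::
  "real \<Rightarrow> ((real,'n::{finite,linorder}) vec,'n) vec \<Rightarrow> real \<Rightarrow> ('n \<Rightarrow> 'n \<Rightarrow> real) \<Rightarrow> ('n \<Rightarrow> real) \<Rightarrow> 'n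
     \<Rightarrow> ('n \<Rightarrow> real) \<Rightarrow> ('n \<Rightarrow> real)" where
  "bagus_sweep nn S w22 A c j beta =
     fold (bagus_coord nn S w22 A c j) (sorted_list_of_set (UNIV - {j})) beta"

definition bagus_col_update ::
  "real \<Rightarrow> ((real,'n::{finite,linorder}) vec,'n) vec \<Rightarrow> real \<Rightarrow> real \<Rightarrow> real \<Rightarrow> real \<Rightarrow> ('n \<Rightarrow> 'n \<Rightarrow> real)
     \<Rightarrow> nat \<Rightarrow> 'n \<Rightarrow> ((real,'n) vec,'n) vec \<times> ((real,'n) vec,'n) vec \<Rightarrow> ((real,'n) vec,'n) vec \<times> ((real,'n) vec,'n) vec" where
  "bagus_col_update nn S tau v0 v1 B P m j st =
    (let Th = fst st; W = snd st;
         w22 = S $ j $ j + 2 / nn * tau;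
         A = (\<lambda>k l. W $ k $ l - W $ k $ j * W $ l $ j / W $ j $ j);
         c = (\<lambda>k. P k j / v1 + (1 - P k j) / v0);
         beta0 = (\<lambda>k. Th $ k $ j);
         beta1 = (bagus_sweep nn S w22 A c j ^^ m) beta0;
         Thc = (\<chi> a b. if a = j \<and> b \<noteq> j then beta1 b
                        else if b = j \<and> a \<noteq> j then beta1 a else Th $ a $ b);
         beta = (if spec_norm Thc > B then beta0 else beta1);
         q = (\<Sum>k\<in>UNIV - {j}. \<Sum>l\<in>UNIV - {j}. beta k * A k l * beta l);
         th22 = 1 / w22 + q;
         Th' = (\<chi> a b. if a = j \<and> b = j then th22 else if a = j then beta b
                        else if b = j then beta a else Th $ a $ b);
         Abeta = (\<lambda>k. \<Sum>l\<in>UNIV - {j}. A k l * beta l);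
         d = th22 - q;
         W' = (\<chi> a b. if a = j \<and> b = j then w22 else if a = j then - Abeta b / d
                       else if b = j then - Abeta a / d else A a b + Abeta a * Abeta b / d)
     in (Th', W'))"

text \<open>One EM iteration (E-step, then M-step over columns j in increasing order);
  sw j is the number of coordinate-descent sweeps used for column j.\<close>
definition bagus_iter ::
  "nat \<Rightarrow> ((real,'n::{finite,linorder}) vec,'n) vec \<Rightarrow> real \<Rightarrow> real \<Rightarrow> real \<Rightarrow> real \<Rightarrow> real
     \<Rightarrow> ('n \<Rightarrow> nat) \<Rightarrow> ((real,'n) vec,'n) vec \<times> ((real,'n) vec,'n) vec \<Rightarrow> ((real,'n) vec,'n) vec \<times> ((real,'n) vec,'n) vec" where
  "bagus_iter n S v0 v1 eta tau B sw st =
     (let P = bagus_estep v0 v1 eta (fst st)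
      in fold (\<lambda>j. bagus_col_update (real n) S tau v0 v1 B P (sw j) j)
              (sorted_list_of_set UNIV) st)"

text \<open>State after T EM iterations; sweeps t j = number of inner sweeps in iteration t, column j.\<close>
primrec bagus_run ::
  "nat \<Rightarrow> ((real,'n::{finite,linorder}) vec,'n) vec \<Rightarrow> real \<Rightarrow> real \<Rightarrow> real \<Rightarrow> real \<Rightarrow> real \<Rightarrow> ((real,'n) vec,'n) vec
     \<Rightarrow> (nat \<Rightarrow> 'n \<Rightarrow> nat) \<Rightarrow> nat \<Rightarrow> ((real,'n) vec,'n) vec \<times> ((real,'n) vec,'n) vec" where
  "bagus_run n S v0 v1 eta tau B Th0 sweeps 0 = (Th0, matrix_inv Th0)"
| "bagus_run n S v0 v1 eta tau B Th0 sweeps (Suc t) =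
     bagus_iter n S v0 v1 eta tau B (sweeps t) (bagus_run n S v0 v1 eta tau B Th0 sweeps t)"

definition bagus_Theta ::
  "nat \<Rightarrow> ((real,'n::{finite,linorder}) vec,'n) vec \<Rightarrow> real \<Rightarrow> real \<Rightarrow> real \<Rightarrow> real \<Rightarrow> real \<Rightarrow> ((real,'n) vec,'n) vec
     \<Rightarrow> (nat \<Rightarrow> 'n \<Rightarrow> nat) \<Rightarrow> nat \<Rightarrow> ((real,'n) vec,'n) vec" where
  "bagus_Theta n S v0 v1 eta tau B Th0 sweeps T = fst (bagus_run n S v0 v1 eta tau B Th0 sweeps T)"

end

theory Submission
  imports Defs
begin

text \<open>Each column update of the M-step overwrites row and column j of Theta by beta and
  theta22 = 1/w22 + beta' Theta11^-1 beta, whatever beta the coordinate descent and the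
  spectral-norm safeguard return; so symmetry is preserved, and the Schur complement of Theta11
  in the new matrix is 1/w22 > 0, where w22 = s_jj + 2 tau/n > 0. Hence the new matrix is
  positive definite as soon as Theta (and thus Theta11) is. This propagates along the iterations
  because the W-update is exactly the block-inverse formula, which keeps W = Theta^-1 and hence
  W11 - w12 w12'/w22 = Theta11^-1.\<close>

definition border_mat :: "real^'n^'n \<Rightarrow> 'n \<Rightarrow> ('n \<Rightarrow> real) \<Rightarrow> real \<Rightarrow> real^'n^'n" where
  "border_mat Th j beta c = (\<chi> a b. if a = j \<and> b = j then c else if a = j then beta b
                                    else if b = j then beta a else Th $ a $ b)"

text \<open>The inverse of Theta with row and column j deleted, computed from W = Theta^-1.\<close>

definition minor_inverse :: "real^'n^'n \<Rightarrow> 'n \<Rightarrow> 'n \<Rightarrow> 'n \<Rightarrow> real" where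
  "minor_inverse W j k l = W $ k $ l - W $ k $ j * W $ l $ j / W $ j $ j"

definition inverts_minor :: "real^'n^'n \<Rightarrow> 'n \<Rightarrow> ('n \<Rightarrow> 'n \<Rightarrow> real) \<Rightarrow> bool" where
  "inverts_minor A j Ai \<longleftrightarrow> (\<forall>k l. k \<noteq> j \<longrightarrow> l \<noteq> j \<longrightarrow>
      (\<Sum>m\<in>UNIV - {j}. A$k$m * Ai m l) = (if k = l then 1 else 0))"

definition minor_mult_vec :: "('n::finite \<Rightarrow> 'n \<Rightarrow> real) \<Rightarrow> 'n \<Rightarrow> ('n \<Rightarrow> real) \<Rightarrow> 'n \<Rightarrow> real" where
  "minor_mult_vec A j beta k = (\<Sum>l\<in>UNIV - {j}. A k l * beta l)"

definition minor_quad_form :: "('n::finite \<Rightarrow> 'n \<Rightarrow> real) \<Rightarrow> 'n \<Rightarrow> ('n \<Rightarrow> real) \<Rightarrow> real" where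
  "minor_quad_form A j beta = (\<Sum>k\<in>UNIV - {j}. \<Sum>l\<in>UNIV - {j}. beta k * A k l * beta l)"

text \<open>Block inverse of border_mat A j beta (d + minor_quad_form Ai j beta), where Ai inverts the
  j-minor of A and d is the Schur complement of that minor.\<close>

definition border_inverse :: "('n::finite \<Rightarrow> 'n \<Rightarrow> real) \<Rightarrow> 'n \<Rightarrow> ('n \<Rightarrow> real) \<Rightarrow> real \<Rightarrow> real^'n^'n" where
  "border_inverse A j beta d =
     (\<chi> a b. if a = j \<and> b = j then 1 / d else if a = j then - minor_mult_vec A j beta b / d
            else if b = j then - minor_mult_vec A j beta a / d
            else A a b + minor_mult_vec A j beta a * minor_mult_vec A j beta b / d)"

lemma sum_UNIV_split: "sum f (UNIV::'n::finite set) = f j + sum f (UNIV - {j})"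
  by (simp add: sum.remove)

lemma inner_mat_vec_double_sum:
  "(x::real^'n) \<bullet> (M *v x) = (\<Sum>a\<in>UNIV. \<Sum>b\<in>UNIV. x$a * M$a$b * x$b)"
  by (simp add: inner_vec_def matrix_vector_mult_def sum_distrib_left mult.assoc)

lemma transpose_eq_self_iff: "transpose A = A \<longleftrightarrow> (\<forall>a b. A$a$b = A$b$a)"
  by (auto simp: vec_eq_iff transpose_def)

lemma right_inverse_symmetric:
  fixes A W :: "real^'n^'n"
  assumes "transpose A = A" and "A ** W = mat 1"
  shows "transpose W = W"
proof -
  have "transpose W ** A = mat 1"
    using arg_cong[OF assms(2), of transpose] assms(1) by (simp add: matrix_transpose_mul)
  then show ?thesis
    by (metis assms(2) matrix_mul_assoc matrix_mul_lid matrix_mul_rid)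
qed

lemma pos_def_mat_right_inverse_diag_pos:
  fixes A W :: "real^'n^'n"
  assumes "pos_def_mat A" and "A ** W = mat 1"
  shows "W $ j $ j > 0"
proof -
  define v where "v = W *v axis j 1"
  have "A *v v = axis j 1"
    by (simp add: v_def matrix_vector_mul_assoc assms(2))
  moreover have "v \<noteq> 0"
    using calculation by auto
  ultimately have "v \<bullet> axis j 1 > 0"
    using assms(1) unfolding pos_def_mat_def by metis
  then have "v $ j > 0"
    by (simp add: inner_axis)
  then show ?thesis
    by (simp add: v_def matrix_vector_mult_basis column_def)
qed

lemma pos_def_mat_right_inverse:
  fixes A :: "real^'n^'n"
  assumes "pos_def_mat A"
  shows "A ** matrix_inv A = mat 1"
proof -
  have "\<forall>x. A *v x = 0 \<longrightarrow> x = 0"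
    using assms unfolding pos_def_mat_def by (metis inner_zero_right less_irrefl)
  then have "invertible A"
    using matrix_left_invertible_ker invertible_left_inverse by blast
  then show ?thesis
    unfolding invertible_def matrix_inv_def by (rule someI_ex[THEN conjunct1])
qed

lemma pos_semidef_mat_diag_nonneg:
  assumes "pos_semidef_mat (S::real^'n^'n)"
  shows "S $ j $ j \<ge> 0"
proof -
  have "axis j 1 \<bullet> (S *v axis j 1) \<ge> 0"
    using assms unfolding pos_semidef_mat_def by blast
  then show ?thesis
    by (simp add: inner_axis' matrix_vector_mult_basis column_def)
qed

lemma inverts_minor_minor_inverse:
  fixes A W :: "real^'n::finite^'n"
  assumes "A ** W = mat 1" and "transpose W = W" and "W $ j $ j \<noteq> 0"
  shows "inverts_minor A j (minor_inverse W j)"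
  unfolding inverts_minor_def
proof (intro allI impI)
  fix k l
  assume "k \<noteq> j" "l \<noteq> j"
  have entry: "(\<Sum>m\<in>UNIV. A$k$m * W$m$i) = (if k = i then 1 else 0)" for i
    using arg_cong[OF assms(1), of "\<lambda>M. M$k$i"] by (simp add: matrix_matrix_mult_def mat_def)
  have col_l: "(\<Sum>m\<in>UNIV - {j}. A$k$m * W$m$l) = (if k = l then 1 else 0) - A$k$j * W$j$l"
    using entry[of l] sum_UNIV_split[of "\<lambda>m. A$k$m * W$m$l" j] by simp
  have col_j: "(\<Sum>m\<in>UNIV - {j}. A$k$m * W$m$j) = - A$k$j * W$j$j"
    using entry[of j] sum_UNIV_split[of "\<lambda>m. A$k$m * W$m$j" j] \<open>k \<noteq> j\<close> by simp
  have "(\<Sum>m\<in>UNIV - {j}. A$k$m * minor_inverse W j m l)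
      = (\<Sum>m\<in>UNIV - {j}. A$k$m * W$m$l) - (\<Sum>m\<in>UNIV - {j}. A$k$m * W$m$j) * (W$l$j / W$j$j)"
    by (simp add: minor_inverse_def right_diff_distrib sum_subtractf sum_distrib_right
        mult.assoc sum_divide_distrib)
  also have "\<dots> = (if k = l then 1 else 0)"
    using col_l col_j assms(2,3) by (simp add: transpose_eq_self_iff)
  finally show "(\<Sum>m\<in>UNIV - {j}. A$k$m * minor_inverse W j m l) = (if k = l then 1 else 0)" .
qed

lemma minor_inverse_symmetric:
  assumes "transpose W = W"
  shows "minor_inverse W j k l = minor_inverse W j l k"
  using assms by (simp add: minor_inverse_def transpose_eq_self_iff mult.commute)

lemma minor_quad_form_eq:
  "minor_quad_form A j beta = (\<Sum>k\<in>UNIV - {j}. beta k * minor_mult_vec A j beta k)"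
  by (simp add: minor_quad_form_def minor_mult_vec_def sum_distrib_left mult.assoc)

lemma sum_mult_minor_mult_vec:
  fixes A :: "real^'n::finite^'n"
  assumes "inverts_minor A j Ai" and "k \<noteq> j"
  shows "(\<Sum>m\<in>UNIV - {j}. A$k$m * minor_mult_vec Ai j beta m) = beta k"
proof -
  have "(\<Sum>m\<in>UNIV - {j}. A$k$m * minor_mult_vec Ai j beta m)
      = (\<Sum>l\<in>UNIV - {j}. (\<Sum>m\<in>UNIV - {j}. A$k$m * Ai m l) * beta l)"
    unfolding minor_mult_vec_def sum_distrib_left sum_distrib_right mult.assoc
    by (rule sum.swap)
  also have "\<dots> = (\<Sum>l\<in>UNIV - {j}. if k = l then beta l else 0)"
    using assms by (intro sum.cong) (simp_all add: inverts_minor_def)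
  also have "\<dots> = beta k"
    using assms(2) by simp
  finally show ?thesis .
qed

lemma transpose_border_mat:
  assumes "transpose A = A"
  shows "transpose (border_mat A j beta c) = border_mat A j beta c"
  using assms by (auto simp: transpose_eq_self_iff border_mat_def)

lemma border_mat_quadratic_form:
  fixes A :: "real^'n::finite^'n" and x :: "real^'n" and beta :: "'n \<Rightarrow> real"
  assumes "transpose A = A" and inv: "inverts_minor A j Ai"
  defines "z \<equiv> \<chi> k. if k = j then 0 else x$k + x$j * minor_mult_vec Ai j beta k"
  shows "x \<bullet> (border_mat A j beta (d + minor_quad_form Ai j beta) *v x) = z \<bullet> (A *v z) + d * (x$j)\<^sup>2"
proof -
  let ?R = "UNIV - {j}" and ?t = "x$j" and ?Ab = "minor_mult_vec Ai j beta"
  have x_A_Ab: "(\<Sum>a\<in>?R. \<Sum>b\<in>?R. x$a * A$a$b * ?Ab b) = (\<Sum>a\<in>?R. x$a * beta a)"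
  proof -
    have "(\<Sum>a\<in>?R. \<Sum>b\<in>?R. x$a * A$a$b * ?Ab b) = (\<Sum>a\<in>?R. x$a * (\<Sum>b\<in>?R. A$a$b * ?Ab b))"
      by (simp add: sum_distrib_left mult.assoc)
    then show ?thesis
      by (simp add: sum_mult_minor_mult_vec[OF inv])
  qed
  have Ab_A_x: "(\<Sum>a\<in>?R. \<Sum>b\<in>?R. ?Ab a * A$a$b * x$b) = (\<Sum>a\<in>?R. x$a * beta a)"
  proof -
    have "(\<Sum>a\<in>?R. \<Sum>b\<in>?R. ?Ab a * A$a$b * x$b) = (\<Sum>b\<in>?R. \<Sum>a\<in>?R. x$b * A$b$a * ?Ab a)"
      using assms(1) by (subst sum.swap) (simp add: transpose_eq_self_iff mult_ac)
    then show ?thesis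
      using x_A_Ab by simp
  qed
  have Ab_A_Ab: "(\<Sum>a\<in>?R. \<Sum>b\<in>?R. ?Ab a * A$a$b * ?Ab b) = minor_quad_form Ai j beta"
  proof -
    have "(\<Sum>a\<in>?R. \<Sum>b\<in>?R. ?Ab a * A$a$b * ?Ab b) = (\<Sum>a\<in>?R. ?Ab a * (\<Sum>b\<in>?R. A$a$b * ?Ab b))"
      by (simp add: sum_distrib_left mult.assoc)
    then show ?thesis
      by (simp add: sum_mult_minor_mult_vec[OF inv] minor_quad_form_eq mult.commute)
  qed
  have "z \<bullet> (A *v z) = (\<Sum>a\<in>?R. \<Sum>b\<in>?R. (x$a + ?t * ?Ab a) * A$a$b * (x$b + ?t * ?Ab b))"
    by (simp add: inner_mat_vec_double_sum sum_UNIV_split[of _ j] z_def)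
  also have "\<dots> = (\<Sum>a\<in>?R. \<Sum>b\<in>?R. x$a * A$a$b * x$b)
      + ?t * (\<Sum>a\<in>?R. \<Sum>b\<in>?R. x$a * A$a$b * ?Ab b) + ?t * (\<Sum>a\<in>?R. \<Sum>b\<in>?R. ?Ab a * A$a$b * x$b)
      + ?t * ?t * (\<Sum>a\<in>?R. \<Sum>b\<in>?R. ?Ab a * A$a$b * ?Ab b)"
    by (simp add: sum.distrib sum_distrib_left algebra_simps)
  finally have z_form: "z \<bullet> (A *v z) = (\<Sum>a\<in>?R. \<Sum>b\<in>?R. x$a * A$a$b * x$b)
      + 2 * ?t * (\<Sum>a\<in>?R. x$a * beta a) + ?t * ?t * minor_quad_form Ai j beta"
    unfolding x_A_Ab Ab_A_x Ab_A_Ab by simp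
  have "x \<bullet> (border_mat A j beta (d + minor_quad_form Ai j beta) *v x)
      = ?t * (d + minor_quad_form Ai j beta) * ?t + (\<Sum>b\<in>?R. ?t * beta b * x$b)
        + (\<Sum>a\<in>?R. x$a * beta a * ?t) + (\<Sum>a\<in>?R. \<Sum>b\<in>?R. x$a * A$a$b * x$b)"
    by (simp add: inner_mat_vec_double_sum sum_UNIV_split[of _ j] border_mat_def sum.distrib algebra_simps)
  then show ?thesis
    unfolding z_form by (simp add: sum_distrib_left sum_distrib_right algebra_simps power2_eq_square)
qed

lemma pos_def_border_mat:
  fixes A :: "real^'n::finite^'n"
  assumes "pos_def_mat A" and inv: "inverts_minor A j Ai" and "d > 0"
  shows "pos_def_mat (border_mat A j beta (d + minor_quad_form Ai j beta))"
  unfolding pos_def_mat_def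
proof (intro conjI allI impI)
  have "transpose A = A"
    using assms(1) by (simp add: pos_def_mat_def)
  then show "transpose (border_mat A j beta (d + minor_quad_form Ai j beta))
      = border_mat A j beta (d + minor_quad_form Ai j beta)"
    by (rule transpose_border_mat)
  fix x :: "real^'n"
  assume "x \<noteq> 0"
  define z where "z = (\<chi> k. if k = j then 0 else x$k + x$j * minor_mult_vec Ai j beta k)"
  have form: "x \<bullet> (border_mat A j beta (d + minor_quad_form Ai j beta) *v x) = z \<bullet> (A *v z) + d * (x$j)\<^sup>2"
    unfolding z_def using \<open>transpose A = A\<close> inv by (rule border_mat_quadratic_form)
  have A_pos: "z \<noteq> 0 \<Longrightarrow> z \<bullet> (A *v z) > 0"
    using assms(1) by (simp add: pos_def_mat_def)
  show "x \<bullet> (border_mat A j beta (d + minor_quad_form Ai j beta) *v x) > 0"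
  proof (cases "x$j = 0")
    case True
    then have "z = x"
      by (simp add: vec_eq_iff z_def)
    then show ?thesis
      using form A_pos \<open>x \<noteq> 0\<close> True by simp
  next
    case False
    have "z \<bullet> (A *v z) \<ge> 0"
      using A_pos by (cases "z = 0") (auto intro: less_imp_le)
    then show ?thesis
      using form False \<open>d > 0\<close> by (simp add: add_nonneg_pos)
  qed
qed

lemma border_mat_mult_border_inverse:
  fixes A :: "real^'n::finite^'n"
  assumes inv: "inverts_minor A j Ai" and Ai_sym: "\<And>k l. Ai k l = Ai l k"
    and "d \<noteq> 0"
  shows "border_mat A j beta (d + minor_quad_form Ai j beta) ** border_inverse Ai j beta d = mat 1"
proof -
  let ?R = "UNIV - {j}" and ?Ab = "minor_mult_vec Ai j beta" and ?q = "minor_quad_form Ai j beta"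
  let ?M = "border_mat A j beta (d + ?q)" and ?N = "border_inverse Ai j beta d"
  have beta_Ai: "(\<Sum>m\<in>?R. beta m * Ai m b) = ?Ab b" for b
    unfolding minor_mult_vec_def by (rule sum.cong) (simp_all add: Ai_sym mult.commute)
  have entry: "(?M ** ?N)$a$b = ?M$a$j * ?N$j$b + (\<Sum>m\<in>?R. ?M$a$m * ?N$m$b)" for a b
    by (simp add: matrix_matrix_mult_def sum_UNIV_split[of _ j])
  have "(?M ** ?N)$a$b = (if a = b then 1 else 0)" for a b
  proof (cases "a = j"; cases "b = j")
    assume "a = j" "b = j"
    have "(\<Sum>m\<in>?R. beta m * (- ?Ab m / d)) = - ?q / d"
      by (simp add: minor_quad_form_eq sum_divide_distrib sum_negf)
    then show ?thesis
      unfolding entry using \<open>a = j\<close> \<open>b = j\<close> \<open>d \<noteq> 0\<close>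
      by (simp add: border_mat_def border_inverse_def field_simps)
  next
    assume "a = j" "b \<noteq> j"
    have "(\<Sum>m\<in>?R. beta m * (Ai m b + ?Ab m * ?Ab b / d)) = ?Ab b + ?q * ?Ab b / d"
      by (simp add: minor_quad_form_eq beta_Ai sum.distrib distrib_left sum_divide_distrib
          sum_distrib_right mult.assoc)
    then show ?thesis
      unfolding entry using \<open>a = j\<close> \<open>b \<noteq> j\<close> \<open>d \<noteq> 0\<close>
      by (simp add: border_mat_def border_inverse_def field_simps)
  next
    assume "a \<noteq> j" "b = j"
    have "(\<Sum>m\<in>?R. A$a$m * (- ?Ab m / d)) = - beta a / d"
      using sum_mult_minor_mult_vec[OF inv \<open>a \<noteq> j\<close>]
      by (simp add: sum_divide_distrib[symmetric] sum_negf)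
    then show ?thesis
      unfolding entry using \<open>a \<noteq> j\<close> \<open>b = j\<close> \<open>d \<noteq> 0\<close>
      by (simp add: border_mat_def border_inverse_def)
  next
    assume "a \<noteq> j" "b \<noteq> j"
    have "(\<Sum>m\<in>?R. A$a$m * ?Ab m * ?Ab b / d) = (\<Sum>m\<in>?R. A$a$m * ?Ab m) * ?Ab b / d"
      by (simp add: sum_distrib_right sum_divide_distrib)
    then have "(\<Sum>m\<in>?R. A$a$m * (Ai m b + ?Ab m * ?Ab b / d))
        = (if a = b then 1 else 0) + beta a * ?Ab b / d"
      using sum_mult_minor_mult_vec[OF inv \<open>a \<noteq> j\<close>] inv \<open>a \<noteq> j\<close> \<open>b \<noteq> j\<close>
      by (simp add: inverts_minor_def sum.distrib distrib_left mult.assoc[symmetric])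
    then show ?thesis
      unfolding entry using \<open>a \<noteq> j\<close> \<open>b \<noteq> j\<close>
      by (simp add: border_mat_def border_inverse_def)
  qed
  then show ?thesis
    by (simp add: vec_eq_iff mat_def)
qed

lemma bagus_col_update_border_mat:
  obtains beta where "bagus_col_update nn S tau v0 v1 B P m j (Th, W) =
      (border_mat Th j beta (1 / (S$j$j + 2 / nn * tau) + minor_quad_form (minor_inverse W j) j beta),
       border_inverse (minor_inverse W j) j beta (1 / (S$j$j + 2 / nn * tau)))"
  apply (rule that)
  apply (simp only: bagus_col_update_def Let_def fst_conv snd_conv prod.inject)
  apply (rule conjI)
    \<comment> \<open>beta, the new column j, is found by unification with the first component\<close>
   apply (unfold border_mat_def minor_quad_form_def minor_inverse_def)
   apply (rule refl)
  apply (simp add: border_inverse_def minor_mult_vec_def vec_eq_iff)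
  done

lemma sym_mat_bagus_col_update:
  assumes "sym_mat (fst st)"
  shows "sym_mat (fst (bagus_col_update nn S tau v0 v1 B P m j st))"
proof -
  obtain Th W where st: "st = (Th, W)"
    by fastforce
  show ?thesis
    by (rule bagus_col_update_border_mat[of nn S tau v0 v1 B P m j Th W])
      (use st assms in \<open>simp add: sym_mat_def transpose_border_mat\<close>)
qed

definition pos_def_with_inverse :: "(real^'n^'n) \<times> (real^'n^'n) \<Rightarrow> bool" where
  "pos_def_with_inverse st \<longleftrightarrow> pos_def_mat (fst st) \<and> fst st ** snd st = mat 1"

lemma pos_def_with_inverse_bagus_col_update:
  assumes "pos_def_with_inverse st" and "S$j$j + 2 / nn * tau > 0"
  shows "pos_def_with_inverse (bagus_col_update nn S tau v0 v1 B P m j st)"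
proof -
  obtain Th W where st: "st = (Th, W)"
    by fastforce
  let ?d = "1 / (S$j$j + 2 / nn * tau)" and ?A = "minor_inverse W j"
  obtain beta where upd: "bagus_col_update nn S tau v0 v1 B P m j st =
      (border_mat Th j beta (?d + minor_quad_form ?A j beta), border_inverse ?A j beta ?d)"
    unfolding st by (rule bagus_col_update_border_mat)
  have Th_pd: "pos_def_mat Th" and Th_W: "Th ** W = mat 1"
    using assms(1) by (simp_all add: st pos_def_with_inverse_def)
  have W_sym: "transpose W = W"
    using right_inverse_symmetric[OF _ Th_W] Th_pd by (simp add: pos_def_mat_def)
  have inv: "inverts_minor Th j ?A"
    using Th_W W_sym pos_def_mat_right_inverse_diag_pos[OF Th_pd Th_W, of j]
    by (intro inverts_minor_minor_inverse) simp_all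
  have "?d > 0"
    using assms(2) by simp
  have "pos_def_mat (border_mat Th j beta (?d + minor_quad_form ?A j beta))"
    by (rule pos_def_border_mat[OF Th_pd inv \<open>?d > 0\<close>])
  moreover have "border_mat Th j beta (?d + minor_quad_form ?A j beta) ** border_inverse ?A j beta ?d = mat 1"
    using \<open>?d > 0\<close>
    by (intro border_mat_mult_border_inverse[OF inv minor_inverse_symmetric[OF W_sym]]) auto
  ultimately show ?thesis
    by (simp add: upd pos_def_with_inverse_def)
qed

lemma bagus_run_invariant:
  assumes "I (Th0, matrix_inv Th0)"
    and "\<And>P m j st. I st \<Longrightarrow> I (bagus_col_update (real n) S tau v0 v1 B P m j st)"
  shows "I (bagus_run n S v0 v1 eta tau B Th0 sweeps T)"
proof (induction T)
  case 0
  show ?case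
    using assms(1) by simp
next
  case (Suc T)
  show ?case
    unfolding bagus_run.simps bagus_iter_def Let_def
    by (rule fold_invariant[where P = I and Q = "\<lambda>_. True"]) (simp_all add: Suc.IH assms(2))
qed

theorem theorem5:
  fixes S Th0 :: "((real,'n::{finite,linorder}) vec,'n) vec"
    and n :: nat and v0 v1 eta tau B :: real
    and sweeps :: "nat \<Rightarrow> 'n \<Rightarrow> nat" and T :: nat
  assumes "pos_semidef_mat S"
    and "n > 0"
    and "0 < v0" and "v0 < v1"
    and "0 < eta" and "eta < 1"
    and "tau > 0" and "B > 0"
    and "sym_mat Th0"
  shows "sym_mat (bagus_Theta n S v0 v1 eta tau B Th0 sweeps T)
     \<and> (pos_def_mat Th0 \<longrightarrow> pos_def_mat (bagus_Theta n S v0 v1 eta tau B Th0 sweeps T))"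
proof (intro conjI impI)
  have "sym_mat (fst (bagus_run n S v0 v1 eta tau B Th0 sweeps T))"
    by (rule bagus_run_invariant[where I = "\<lambda>st. sym_mat (fst st)"])
      (simp_all add: assms(9) sym_mat_bagus_col_update)
  then show "sym_mat (bagus_Theta n S v0 v1 eta tau B Th0 sweeps T)"
    by (simp add: bagus_Theta_def)
  assume "pos_def_mat Th0"
  have w22_pos: "S$j$j + 2 / real n * tau > 0" for j
    using pos_semidef_mat_diag_nonneg[OF assms(1), of j] assms(2,7) by (simp add: add_nonneg_pos)
  have "pos_def_with_inverse (Th0, matrix_inv Th0)"
    using \<open>pos_def_mat Th0\<close> pos_def_mat_right_inverse by (simp add: pos_def_with_inverse_def)
  then have "pos_def_with_inverse (bagus_run n S v0 v1 eta tau B Th0 sweeps T)"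
    by (rule bagus_run_invariant[where I = pos_def_with_inverse])
      (rule pos_def_with_inverse_bagus_col_update[OF _ w22_pos])
  then show "pos_def_mat (bagus_Theta n S v0 v1 eta tau B Th0 sweeps T)"
    by (simp add: bagus_Theta_def pos_def_with_inverse_def)
qed

end
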